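(* For any $1\le q\le\mathsf n-1$, \[\big|\log\mathbb P_{\pi_V}(X_q\mid X_{q+1:\mathsf n})\big|\le\log(\nu_q^{-1}),\] and for all $\ell\ge1$ and $1\le q\le\mathsf n-1$, \[\big|\log\mathbb P_{\pi_V}(X_q\mid X_{q+1:\mathsf n})-\log\mathbb P_{\pi_V}(X_q\mid X_{q+1:\mathsf n+\ell})\big|\le\nu_q^{-1}\prod_{k=q+1}^{\mathsf n-1}(1-\nu_k),\] with the convention that an empty product equals $1$. These bounds hold for every realization of the observations.
   Context: $\pi_V$ is a probability distribution on a measurable space $\mathbb V$, $\mathbb X$ a discrete set, and $K_i:\mathbb X\times\mathbb V^2\to[0,\infty)$ ($i\ge1$) are such that each $K_i(\cdot,v,w)$ is a probability on $\mathbb X$. For any length $m\ge1$, $\mathbb P_{\pi_V}$ denotes the law of $(V_{1:m+1},X_{1:m})$ where $V_i$ are i.i.d. $\pi_V$ and, given $V$, the $X_i$ are independent with $\mathbb P(X_i=x\mid V)=K_i(x,V_i,V_{i+1})$ (these laws are consistent in $m$); $\mathbb P_{\pi_V}(X_q\mid X_{q+1:m})$ is the conditional probability of the observed value of $X_q$ given the observed $X_{q+1:m}$. Assumption H2: there exist $\nu_i>0$ with $\nu_i\le K_i(x,v,w)\le1$ for all $x,i,v,w$. *)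

theory Defs
  imports "HOL-Probability.Probability"
begin

text \<open>Probability, under the law P_piV of the model of length m (V_1..V_{m+1} i.i.d. piV,
  X_i conditionally independent given V with P(X_i = x | V) = K i x V_i V_{i+1}),
  of the event that X_i = x i for all i in the index set A (a subset of 1..m).\<close>
definition obs_prob ::
  "'v measure \<Rightarrow> (nat \<Rightarrow> 'x \<Rightarrow> 'v \<Rightarrow> 'v \<Rightarrow> real) \<Rightarrow> nat \<Rightarrow> nat set \<Rightarrow> (nat \<Rightarrow> 'x) \<Rightarrow> real"
  where
  "obs_prob piV K m A x =
     (\<integral>v. (\<Prod>i\<in>A. K i (x i) (v i) (v (Suc i))) \<partial>(PiM {1..m+1} (\<lambda>_. piV)))"

definition cond_prob ::
  "'v measure \<Rightarrow> (nat \<Rightarrow> 'x \<Rightarrow> 'v \<Rightarrow> 'v \<Rightarrow> real) \<Rightarrow> nat \<Rightarrow> nat \<Rightarrow> (nat \<Rightarrow> 'x) \<Rightarrow> real"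
  where
  "cond_prob piV K q m x = obs_prob piV K m {q..m} x / obs_prob piV K m {q+1..m} x"

end

theory Submission
  imports Defs
begin

text \<open>Integrating out V_q, V_{q+1}, ... in turn writes P(X_{q:m} = x_{q:m}) as the integral
  of h = T_m ... T_q 1, where T_k F (w) = \<integral> F(v) K_k(x_k, v, w) d\<pi>_V(v), and the denominator
  as the integral of e = T_m ... T_{q+1} 1. By H2 each T_k is a Doeblin minorization:
  T_k F \<ge> \<nu>_k \<integral>F for F \<ge> 0. Hence if a e \<le> h \<le> b e, applying T_k to h - a e and b e - h
  moves both bounds towards the ratio of the integrals and shrinks b - a by the factor
  1 - \<nu>_k, while later steps preserve the bracket. So all P(X_q | X_{q+1:m}) with m \<ge> n lie
  in one interval [a, b] \<subseteq> [\<nu>_q, 1] of length at most \<Prod>_{k=q+1}^{n-1} (1 - \<nu>_k), and on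
  [\<nu>_q, 1] the logarithm is (1/\<nu>_q)-Lipschitz.\<close>

locale minorized_hmm =
  fixes piV :: "'v measure"
    and K :: "nat \<Rightarrow> 'x \<Rightarrow> 'v \<Rightarrow> 'v \<Rightarrow> real"
    and \<nu> :: "nat \<Rightarrow> real"
    and x :: "nat \<Rightarrow> 'x"
  assumes prob_space_piV: "prob_space piV"
    and K_measurable: "\<And>i y. i \<ge> 1 \<Longrightarrow> (\<lambda>(v, w). K i y v w) \<in> borel_measurable (piV \<Otimes>\<^sub>M piV)"
    and nu_pos: "\<And>i. i \<ge> 1 \<Longrightarrow> \<nu> i > 0"
    and K_bounds: "\<And>i y v w. i \<ge> 1 \<Longrightarrow> v \<in> space piV \<Longrightarrow> w \<in> space piV \<Longrightarrow>
                    \<nu> i \<le> K i y v w \<and> K i y v w \<le> 1"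
begin

interpretation P: prob_space piV by (rule prob_space_piV)

lemma measurable_K_comp:
  assumes "i \<ge> 1" "f \<in> measurable M piV" "g \<in> measurable M piV"
  shows "(\<lambda>z. K i y (f z) (g z)) \<in> borel_measurable M"
  using measurable_compose[OF measurable_Pair[OF assms(2,3)] K_measurable[OF assms(1), of y]]
  by simp

lemma K_nonneg: "i \<ge> 1 \<Longrightarrow> v \<in> space piV \<Longrightarrow> w \<in> space piV \<Longrightarrow> 0 \<le> K i y v w"
  using K_bounds[of i v w y] nu_pos[of i] by linarith

lemma nu_le_1: "i \<ge> 1 \<Longrightarrow> \<nu> i \<le> 1"
  using K_bounds P.not_empty by fastforce

definition bdd_measurable :: "('v \<Rightarrow> real) \<Rightarrow> bool" where
  "bdd_measurable G \<longleftrightarrow> G \<in> borel_measurable piV \<and> (\<exists>C. \<forall>w\<in>space piV. \<bar>G w\<bar> \<le> C)"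

lemma bdd_measurable_const: "bdd_measurable (\<lambda>_. c)"
  unfolding bdd_measurable_def by auto

lemma bdd_measurable_diff:
  assumes "bdd_measurable F" "bdd_measurable G"
  shows "bdd_measurable (\<lambda>v. F v - c * G v)"
proof -
  obtain C1 where F: "F \<in> borel_measurable piV" "\<forall>w\<in>space piV. \<bar>F w\<bar> \<le> C1"
    using assms(1) unfolding bdd_measurable_def by auto
  obtain C2 where G: "G \<in> borel_measurable piV" "\<forall>w\<in>space piV. \<bar>G w\<bar> \<le> C2"
    using assms(2) unfolding bdd_measurable_def by auto
  have "\<bar>F w - c * G w\<bar> \<le> C1 + \<bar>c\<bar> * C2" if "w \<in> space piV" for w
  proof -
    have "\<bar>F w - c * G w\<bar> \<le> \<bar>F w\<bar> + \<bar>c\<bar> * \<bar>G w\<bar>"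
      using abs_triangle_ineq4[of "F w" "c * G w"] by (simp add: abs_mult)
    also have "\<dots> \<le> C1 + \<bar>c\<bar> * C2"
      using F(2) G(2) that by (intro add_mono mult_left_mono) auto
    finally show ?thesis .
  qed
  then show ?thesis using F(1) G(1) unfolding bdd_measurable_def by auto
qed

lemma bdd_measurable_scale: "bdd_measurable G \<Longrightarrow> bdd_measurable (\<lambda>v. c * G v)"
  using bdd_measurable_diff[OF bdd_measurable_const, of G 0 "- c"] by simp

lemma integrable_bdd_measurable: "bdd_measurable G \<Longrightarrow> integrable piV G"
  unfolding bdd_measurable_def by (auto intro!: P.integrable_const_bound AE_I2)

lemma abs_mult_K_le:
  assumes "k \<ge> 1" "v \<in> space piV" "w \<in> space piV"
  shows "\<bar>G v * K k y v w\<bar> \<le> \<bar>G v\<bar>"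
proof -
  have "\<bar>G v * K k y v w\<bar> = \<bar>G v\<bar> * K k y v w"
    using K_nonneg[OF assms] by (simp add: abs_mult)
  also have "\<dots> \<le> \<bar>G v\<bar>"
    using K_bounds[OF assms] mult_left_mono[of "K k y v w" 1 "\<bar>G v\<bar>"] by simp
  finally show ?thesis .
qed

lemma bdd_measurable_mult_K:
  assumes "bdd_measurable G" "k \<ge> 1" "w \<in> space piV"
  shows "bdd_measurable (\<lambda>v. G v * K k y v w)"
proof -
  obtain C where G: "G \<in> borel_measurable piV" "\<forall>v\<in>space piV. \<bar>G v\<bar> \<le> C"
    using assms(1) unfolding bdd_measurable_def by auto
  have "(\<lambda>v. K k y v w) \<in> borel_measurable piV"
    using measurable_K_comp[OF assms(2), of "\<lambda>v. v" piV "\<lambda>_. w"] assms(3) by simp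
  moreover have "\<forall>v\<in>space piV. \<bar>G v * K k y v w\<bar> \<le> C"
    using abs_mult_K_le[OF assms(2) _ assms(3)] G(2) by (meson order_trans)
  ultimately show ?thesis using G(1) unfolding bdd_measurable_def by auto
qed

lemma integrable_mult_K:
  "bdd_measurable G \<Longrightarrow> k \<ge> 1 \<Longrightarrow> w \<in> space piV \<Longrightarrow> integrable piV (\<lambda>v. G v * K k y v w)"
  by (intro integrable_bdd_measurable bdd_measurable_mult_K)

definition kernel_step :: "nat \<Rightarrow> ('v \<Rightarrow> real) \<Rightarrow> 'v \<Rightarrow> real" where
  "kernel_step k G w = (\<integral>v. G v * K k (x k) v w \<partial>piV)"

lemma bdd_measurable_kernel_step:
  assumes G: "bdd_measurable G" and k: "k \<ge> 1"
  shows "bdd_measurable (kernel_step k G)"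
proof -
  obtain C where C: "G \<in> borel_measurable piV" "\<forall>w\<in>space piV. \<bar>G w\<bar> \<le> C"
    using G unfolding bdd_measurable_def by auto
  have "(\<lambda>p. G (snd p) * K k (x k) (snd p) (fst p)) \<in> borel_measurable (piV \<Otimes>\<^sub>M piV)"
    using C(1) measurable_K_comp[OF k, of snd _ fst] by measurable
  then have "kernel_step k G \<in> borel_measurable piV"
    unfolding kernel_step_def[abs_def]
    by (intro P.borel_measurable_lebesgue_integral) (simp add: case_prod_beta')
  moreover have "\<bar>kernel_step k G w\<bar> \<le> C" if w: "w \<in> space piV" for w
  proof -
    have "\<bar>kernel_step k G w\<bar> \<le> (\<integral>v. \<bar>G v * K k (x k) v w\<bar> \<partial>piV)"
      unfolding kernel_step_def by (rule integral_abs_bound)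
    also have "\<dots> \<le> (\<integral>v. C \<partial>piV)"
      using integrable_mult_K[OF G k w] C(2)
      by (intro integral_mono) (auto intro: order_trans[OF abs_mult_K_le[OF k _ w]])
    finally show ?thesis by (simp add: P.prob_space)
  qed
  ultimately show ?thesis unfolding bdd_measurable_def by auto
qed

lemma kernel_step_bounds:
  assumes H: "bdd_measurable H" "\<forall>w\<in>space piV. 0 \<le> H w" and k: "k \<ge> 1"
    and w: "w \<in> space piV"
  shows "\<nu> k * integral\<^sup>L piV H \<le> kernel_step k H w \<and> kernel_step k H w \<le> integral\<^sup>L piV H"
proof
  have "\<nu> k * integral\<^sup>L piV H = (\<integral>v. \<nu> k * H v \<partial>piV)" by simp
  also have "\<dots> \<le> kernel_step k H w"
    unfolding kernel_step_def
    using integrable_bdd_measurable[OF H(1)] integrable_mult_K[OF H(1) k w] K_bounds[OF k _ w] H(2)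
    by (intro integral_mono) (auto simp: mult.commute mult_left_mono)
  finally show "\<nu> k * integral\<^sup>L piV H \<le> kernel_step k H w" .
  show "kernel_step k H w \<le> integral\<^sup>L piV H"
    unfolding kernel_step_def
    using integrable_bdd_measurable[OF H(1)] integrable_mult_K[OF H(1) k w] K_bounds[OF k _ w] H(2)
    by (intro integral_mono) (auto intro: mult_left_le)
qed

lemma kernel_step_mono:
  assumes "bdd_measurable E" "bdd_measurable G" "\<forall>v\<in>space piV. E v \<le> G v" "k \<ge> 1"
    "w \<in> space piV"
  shows "kernel_step k E w \<le> kernel_step k G w"
  unfolding kernel_step_def
  using integrable_mult_K[OF assms(1,4,5)] integrable_mult_K[OF assms(2,4,5)]
    K_nonneg[OF assms(4) _ assms(5)] assms(3)
  by (intro integral_mono) (auto intro: mult_right_mono)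

lemma kernel_step_scale: "kernel_step k (\<lambda>v. c * G v) = (\<lambda>w. c * kernel_step k G w)"
  unfolding kernel_step_def by (auto simp: mult.assoc)

lemma kernel_step_diff:
  assumes "bdd_measurable F" "bdd_measurable G" "k \<ge> 1" "w \<in> space piV"
  shows "kernel_step k (\<lambda>v. F v - c * G v) w = kernel_step k F w - c * kernel_step k G w"
proof -
  have "kernel_step k (\<lambda>v. F v - c * G v) w
      = (\<integral>v. F v * K k (x k) v w - c * (G v * K k (x k) v w) \<partial>piV)"
    unfolding kernel_step_def by (simp add: algebra_simps)
  also have "\<dots> = kernel_step k F w - c * kernel_step k G w"
    unfolding kernel_step_def using integrable_mult_K[OF assms(1,3,4)] integrable_mult_K[OF assms(2,3,4)]
    by simp
  finally show ?thesis .
qed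

primrec kernel_steps :: "('v \<Rightarrow> real) \<Rightarrow> nat \<Rightarrow> nat \<Rightarrow> 'v \<Rightarrow> real" where
  "kernel_steps G s 0 = G"
| "kernel_steps G s (Suc d) = kernel_steps (kernel_step s G) (Suc s) d"

lemma bdd_measurable_kernel_steps:
  "bdd_measurable G \<Longrightarrow> s \<ge> 1 \<Longrightarrow> bdd_measurable (kernel_steps G s d)"
  by (induction d arbitrary: G s) (simp_all add: bdd_measurable_kernel_step)

lemma kernel_steps_scale: "kernel_steps (\<lambda>v. c * G v) s d = (\<lambda>w. c * kernel_steps G s d w)"
  by (induction d arbitrary: G s) (auto simp: kernel_step_scale)

lemma kernel_steps_mono:
  "bdd_measurable E \<Longrightarrow> bdd_measurable G \<Longrightarrow> \<forall>w\<in>space piV. E w \<le> G w \<Longrightarrow> s \<ge> 1 \<Longrightarrow>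
   \<forall>w\<in>space piV. kernel_steps E s d w \<le> kernel_steps G s d w"
proof (induction d arbitrary: E G s)
  case (Suc d)
  then show ?case
    using Suc.IH[of "kernel_step s E" "kernel_step s G" "Suc s"]
    by (simp add: kernel_step_mono bdd_measurable_kernel_step)
qed simp

lemma kernel_steps_add: "kernel_steps G s (d1 + d2) = kernel_steps (kernel_steps G s d1) (s + d1) d2"
  by (induction d1 arbitrary: G s) auto

lemma kernel_steps_Suc_right: "kernel_steps G s (Suc d) = kernel_step (s + d) (kernel_steps G s d)"
  using kernel_steps_add[of G s d 1] by simp

lemma kernel_steps_pos:
  assumes "bdd_measurable G" "\<forall>w\<in>space piV. 0 \<le> G w" "integral\<^sup>L piV G > 0" "s \<ge> 1"
  shows "(\<forall>w\<in>space piV. 0 \<le> kernel_steps G s d w) \<and> integral\<^sup>L piV (kernel_steps G s d) > 0"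
  using assms
proof (induction d arbitrary: G s)
  case (Suc d)
  have TG: "bdd_measurable (kernel_step s G)"
    using bdd_measurable_kernel_step Suc.prems(1,4) .
  have pos: "\<nu> s * integral\<^sup>L piV G > 0"
    using nu_pos[OF Suc.prems(4)] Suc.prems(3) by simp
  have lower: "\<forall>w\<in>space piV. \<nu> s * integral\<^sup>L piV G \<le> kernel_step s G w"
    using kernel_step_bounds Suc.prems by blast
  then have "integral\<^sup>L piV (\<lambda>_. \<nu> s * integral\<^sup>L piV G) \<le> integral\<^sup>L piV (kernel_step s G)"
    using integrable_bdd_measurable[OF TG] by (intro integral_mono) auto
  then have "integral\<^sup>L piV (kernel_step s G) > 0"
    using pos by (simp add: P.prob_space)
  moreover have "\<forall>w\<in>space piV. 0 \<le> kernel_step s G w"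
    using lower pos by (meson less_le_trans less_imp_le)
  ultimately show ?case using Suc.IH[of "kernel_step s G" "Suc s"] TG by simp
qed simp

definition weighted_path :: "('v \<Rightarrow> real) \<Rightarrow> nat \<Rightarrow> nat \<Rightarrow> (nat \<Rightarrow> 'v) \<Rightarrow> real" where
  "weighted_path G s b v = G (v s) * (\<Prod>i\<in>{s..<b}. K i (x i) (v i) (v (Suc i)))"

interpretation PS: product_sigma_finite "\<lambda>_::nat. piV"
  by standard

lemma integrable_weighted_path:
  assumes G: "bdd_measurable G" and s: "1 \<le> a" "a \<le> s" "s \<le> b"
  shows "integrable (PiM {a..b} (\<lambda>_. piV)) (weighted_path G s b)"
proof -
  interpret Q: prob_space "PiM {a..b} (\<lambda>_::nat. piV)"
    by (rule prob_space_PiM) (rule prob_space_piV)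
  obtain C where C: "G \<in> borel_measurable piV" "\<forall>w\<in>space piV. \<bar>G w\<bar> \<le> C"
    using G unfolding bdd_measurable_def by auto
  have coord: "v i \<in> space piV" if "v \<in> space (PiM {a..b} (\<lambda>_. piV))" "i \<in> {a..b}" for v i
    using that by (auto simp: space_PiM)
  show ?thesis
  proof (rule Q.integrable_const_bound[where B = C])
    show "AE v in PiM {a..b} (\<lambda>_. piV). norm (weighted_path G s b v) \<le> C"
    proof (rule AE_I2)
      fix v assume v: "v \<in> space (PiM {a..b} (\<lambda>_::nat. piV))"
      let ?P = "\<Prod>i\<in>{s..<b}. K i (x i) (v i) (v (Suc i))"
      have "0 \<le> K i (x i) (v i) (v (Suc i)) \<and> K i (x i) (v i) (v (Suc i)) \<le> 1" if "i \<in> {s..<b}" for i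
        using K_bounds[of i "v i" "v (Suc i)"] K_nonneg[of i "v i" "v (Suc i)"]
          coord[OF v, of i] coord[OF v, of "Suc i"] that s by auto
      then have P: "0 \<le> ?P" "?P \<le> 1"
        by (auto intro: prod_nonneg prod_le_1)
      have "\<bar>G (v s)\<bar> \<le> C" using C(2) coord[OF v, of s] s by auto
      then show "norm (weighted_path G s b v) \<le> C"
        using P mult_left_le[OF P(2), of "\<bar>G (v s)\<bar>"]
        by (simp add: weighted_path_def abs_mult)
    qed
    have "(\<lambda>v. K i (x i) (v i) (v (Suc i))) \<in> borel_measurable (PiM {a..b} (\<lambda>_. piV))"
      if "i \<in> {s..<b}" for i
      by (rule measurable_K_comp) (use that s in \<open>auto intro!: measurable_component_singleton\<close>)
    then show "weighted_path G s b \<in> borel_measurable (PiM {a..b} (\<lambda>_. piV))"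
      unfolding weighted_path_def[abs_def]
      using measurable_compose[OF measurable_component_singleton[of s "{a..b}"] C(1)] s
      by (intro borel_measurable_times borel_measurable_prod) auto
  qed
qed

lemma integral_weighted_path_upd_before:
  assumes "a < s"
  shows "(\<integral>y. weighted_path G s b (v(a := y)) \<partial>piV) = weighted_path G s b v"
proof -
  have "weighted_path G s b (v(a := y)) = weighted_path G s b v" for y
    using assms unfolding weighted_path_def by (auto intro!: prod.cong)
  then show ?thesis by (simp add: P.prob_space)
qed

lemma integral_weighted_path_upd_start:
  assumes "s < b"
  shows "(\<integral>y. weighted_path G s b (v(s := y)) \<partial>piV) = weighted_path (kernel_step s G) (Suc s) b v"
proof -
  have "{s..<b} = insert s {Suc s..<b}" using assms by auto
  then have "(\<lambda>y. weighted_path G s b (v(s := y)))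
      = (\<lambda>y. G y * K s (x s) y (v (Suc s)) * (\<Prod>i\<in>{Suc s..<b}. K i (x i) (v i) (v (Suc i))))"
    unfolding weighted_path_def by (auto intro!: prod.cong)
  then show ?thesis by (simp add: weighted_path_def kernel_step_def)
qed

lemma integral_weighted_path:
  assumes "bdd_measurable G" "1 \<le> a" "a \<le> s" "s \<le> b"
  shows "(\<integral>v. weighted_path G s b v \<partial>PiM {a..b} (\<lambda>_. piV)) = integral\<^sup>L piV (kernel_steps G s (b - s))"
  using assms
proof (induction "b - a" arbitrary: a s G)
  case 0
  then have "a = b" "s = b" "G \<in> borel_measurable piV"
    by (auto simp: bdd_measurable_def)
  then show ?case
    using PS.product_integral_singleton[of G b] by (simp add: weighted_path_def)
next
  case (Suc d)
  have ab: "{a..b} = insert a {Suc a..b}" using Suc by auto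
  have "(\<integral>v. weighted_path G s b v \<partial>PiM {a..b} (\<lambda>_. piV))
      = (\<integral>v. (\<integral>y. weighted_path G s b (v(a := y)) \<partial>piV) \<partial>PiM {Suc a..b} (\<lambda>_. piV))"
    using integrable_weighted_path[OF Suc.prems] unfolding ab
    by (intro PS.product_integral_insert) auto
  also have "\<dots> = integral\<^sup>L piV (kernel_steps G s (b - s))"
  proof (cases "a < s")
    case True
    then show ?thesis
      using Suc.hyps(1)[of "Suc a" G s] Suc.hyps(2) Suc.prems
      by (simp add: integral_weighted_path_upd_before)
  next
    case False
    then have "a = s" "s < b" using Suc by auto
    moreover have "b - s = Suc (b - Suc s)" using \<open>s < b\<close> by simp
    ultimately show ?thesis
      using Suc.hyps(1)[of "Suc s" "kernel_step s G" "Suc s"] Suc.hyps(2) Suc.prems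
      by (simp add: integral_weighted_path_upd_start bdd_measurable_kernel_step)
  qed
  finally show ?case .
qed

lemma obs_prob_eq_kernel_steps:
  assumes "1 \<le> s" "s \<le> m + 1"
  shows "obs_prob piV K m {s..m} x = integral\<^sup>L piV (kernel_steps (\<lambda>_. 1) s (m + 1 - s))"
proof -
  have "obs_prob piV K m {s..m} x
      = (\<integral>v. weighted_path (\<lambda>_. 1) s (m + 1) v \<partial>PiM {1..m+1} (\<lambda>_. piV))"
    unfolding obs_prob_def weighted_path_def by (simp add: atLeastLessThanSuc_atLeastAtMost)
  also have "\<dots> = integral\<^sup>L piV (kernel_steps (\<lambda>_. 1) s (m + 1 - s))"
    using assms by (intro integral_weighted_path bdd_measurable_const) auto
  finally show ?thesis .
qed

lemma integral_bdd_measurable_mono: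
  "bdd_measurable F \<Longrightarrow> bdd_measurable G \<Longrightarrow> \<forall>w\<in>space piV. F w \<le> G w \<Longrightarrow>
   integral\<^sup>L piV F \<le> integral\<^sup>L piV G"
  by (intro integral_mono integrable_bdd_measurable) auto

definition ratio_bracket :: "real \<Rightarrow> real \<Rightarrow> ('v \<Rightarrow> real) \<Rightarrow> ('v \<Rightarrow> real) \<Rightarrow> bool" where
  "ratio_bracket a b h e \<longleftrightarrow> (\<forall>w\<in>space piV. a * e w \<le> h w \<and> h w \<le> b * e w)"

lemma integral_ratio_bracket:
  assumes "bdd_measurable h" "bdd_measurable e" "ratio_bracket a b h e"
  shows "a * integral\<^sup>L piV e \<le> integral\<^sup>L piV h \<and> integral\<^sup>L piV h \<le> b * integral\<^sup>L piV e"
  using integral_bdd_measurable_mono[OF bdd_measurable_scale[OF assms(2), of a] assms(1)]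
    integral_bdd_measurable_mono[OF assms(1) bdd_measurable_scale[OF assms(2), of b]] assms(3)
  unfolding ratio_bracket_def by simp

lemma ratio_bracket_kernel_steps:
  assumes "bdd_measurable h" "bdd_measurable e" "ratio_bracket a b h e" "s \<ge> 1"
  shows "ratio_bracket a b (kernel_steps h s d) (kernel_steps e s d)"
  using kernel_steps_mono[OF bdd_measurable_scale[OF assms(2), of a] assms(1) _ assms(4), of d]
    kernel_steps_mono[OF assms(1) bdd_measurable_scale[OF assms(2), of b] _ assms(4), of d] assms(3)
  unfolding ratio_bracket_def kernel_steps_scale by simp

lemma kernel_step_lower_bracket:
  assumes h: "bdd_measurable h" and e: "bdd_measurable e" and e_nonneg: "\<forall>v\<in>space piV. 0 \<le> e v"
    and E_pos: "integral\<^sup>L piV e > 0" and lower: "\<forall>v\<in>space piV. a * e v \<le> h v"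
    and k: "k \<ge> 1" and w: "w \<in> space piV"
  shows "(a + \<nu> k * (integral\<^sup>L piV h / integral\<^sup>L piV e - a)) * kernel_step k e w
           \<le> kernel_step k h w"
proof -
  define E H where "E = integral\<^sup>L piV e" and "H = integral\<^sup>L piV h"
  have "a * E \<le> H"
    using integral_bdd_measurable_mono[OF bdd_measurable_scale[OF e, of a] h] lower
    unfolding E_def H_def by simp
  then have gap: "0 \<le> \<nu> k * (H / E - a)"
    using E_pos nu_pos[OF k] unfolding E_def by (simp add: pos_le_divide_eq)
  have "\<nu> k * (H - a * E) = \<nu> k * integral\<^sup>L piV (\<lambda>v. h v - a * e v)"
    using integrable_bdd_measurable[OF h] integrable_bdd_measurable[OF e]
    unfolding E_def H_def by simp
  also have "\<dots> \<le> kernel_step k (\<lambda>v. h v - a * e v) w"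
    using kernel_step_bounds[OF bdd_measurable_diff[OF h e] _ k w] lower by simp
  also have "\<dots> = kernel_step k h w - a * kernel_step k e w"
    by (rule kernel_step_diff[OF h e k w])
  finally have minorized: "\<nu> k * (H - a * E) \<le> kernel_step k h w - a * kernel_step k e w" .
  have "kernel_step k e w \<le> E"
    using kernel_step_bounds[OF e e_nonneg k w] unfolding E_def by simp
  then have "\<nu> k * (H / E - a) * kernel_step k e w \<le> \<nu> k * (H / E - a) * E"
    using gap by (rule mult_left_mono)
  also have "\<dots> = \<nu> k * (H - a * E)"
    using E_pos unfolding E_def by (simp add: field_simps)
  finally show ?thesis
    using minorized unfolding E_def[symmetric] H_def[symmetric] by (simp add: algebra_simps)
qed

lemma kernel_step_contracts_bracket:
  assumes h: "bdd_measurable h" and e: "bdd_measurable e" and e_nonneg: "\<forall>v\<in>space piV. 0 \<le> e v"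
    and E_pos: "integral\<^sup>L piV e > 0" and k: "k \<ge> 1" and ab: "ratio_bracket a b h e"
  shows "\<exists>a' b'. a \<le> a' \<and> a' \<le> b' \<and> b' \<le> b \<and> b' - a' = (1 - \<nu> k) * (b - a) \<and>
           ratio_bracket a' b' (kernel_step k h) (kernel_step k e)"
proof -
  define L where "L = integral\<^sup>L piV h / integral\<^sup>L piV e"
  define a' b' where "a' = a + \<nu> k * (L - a)" and "b' = b - \<nu> k * (b - L)"
  have "a \<le> L" "L \<le> b"
    using integral_ratio_bracket[OF h e ab] E_pos
    unfolding L_def by (simp_all add: pos_le_divide_eq pos_divide_le_eq)
  moreover have "0 < \<nu> k" "\<nu> k \<le> 1" using nu_pos[OF k] nu_le_1[OF k] by auto
  ultimately have "a \<le> a'" "b' \<le> b" "0 \<le> (1 - \<nu> k) * (b - a)"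
    unfolding a'_def b'_def by simp_all
  moreover have "b' - a' = (1 - \<nu> k) * (b - a)"
    unfolding a'_def b'_def by (simp add: algebra_simps)
  moreover have "ratio_bracket a' b' (kernel_step k h) (kernel_step k e)"
    unfolding ratio_bracket_def
  proof
    fix w assume w: "w \<in> space piV"
    have lo: "a' * kernel_step k e w \<le> kernel_step k h w"
      using kernel_step_lower_bracket[OF h e e_nonneg E_pos _ k w] ab
      unfolding a'_def L_def ratio_bracket_def by simp
    \<comment> \<open>The upper bound is the lower bound for -h, with -b in place of a.\<close>
    have "(- b + \<nu> k * (- L + b)) * kernel_step k e w \<le> - kernel_step k h w"
      using kernel_step_lower_bracket[OF bdd_measurable_scale[OF h, of "- 1"] e e_nonneg E_pos _ k w,
          of "- b"] ab kernel_step_scale[of k "- 1" h]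
      unfolding L_def ratio_bracket_def by simp
    then have hi: "kernel_step k h w \<le> b' * kernel_step k e w"
      unfolding b'_def by (simp add: algebra_simps)
    show "a' * kernel_step k e w \<le> kernel_step k h w \<and> kernel_step k h w \<le> b' * kernel_step k e w"
      using lo hi by simp
  qed
  ultimately show ?thesis by (intro exI[of _ a'] exI[of _ b']) auto
qed

lemma kernel_steps_one_pos:
  "s \<ge> 1 \<Longrightarrow> (\<forall>w\<in>space piV. 0 \<le> kernel_steps (\<lambda>_. 1) s d w) \<and>
     integral\<^sup>L piV (kernel_steps (\<lambda>_. 1) s d) > 0"
  by (rule kernel_steps_pos[OF bdd_measurable_const]) (auto simp: P.prob_space)

lemma ratio_bracket_shifted_kernel_steps:
  assumes q: "q \<ge> 1"
  shows "\<exists>a b. \<nu> q \<le> a \<and> a \<le> b \<and> b \<le> 1 \<and> b - a \<le> (\<Prod>k\<in>{Suc q..<Suc q + d}. 1 - \<nu> k) \<and>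
     ratio_bracket a b (kernel_steps (\<lambda>_. 1) q (Suc d)) (kernel_steps (\<lambda>_. 1) (Suc q) d)"
proof (induction d)
  case 0
  have "ratio_bracket (\<nu> q) 1 (kernel_step q (\<lambda>_. 1)) (\<lambda>_. 1)"
    using kernel_step_bounds[OF bdd_measurable_const[of 1] _ q]
    by (simp add: ratio_bracket_def P.prob_space)
  then show ?case
    using nu_le_1[OF q] nu_pos[OF q] by (intro exI[of _ "\<nu> q"] exI[of _ 1]) auto
next
  case (Suc d)
  define h e k where "h = kernel_steps (\<lambda>_. 1::real) q (Suc d)"
    and "e = kernel_steps (\<lambda>_. 1::real) (Suc q) d" and "k = Suc q + d"
  obtain a b where ab: "\<nu> q \<le> a" "a \<le> b" "b \<le> 1" "b - a \<le> (\<Prod>i\<in>{Suc q..<k}. 1 - \<nu> i)"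
    "ratio_bracket a b h e"
    using Suc.IH unfolding h_def e_def k_def by blast
  have k: "k \<ge> 1" unfolding k_def by simp
  have "bdd_measurable h" "bdd_measurable e"
    unfolding h_def e_def
    by (intro bdd_measurable_kernel_steps bdd_measurable_const, use q in simp)+
  moreover have "\<forall>w\<in>space piV. 0 \<le> e w" "integral\<^sup>L piV e > 0"
    using kernel_steps_one_pos[of "Suc q" d] unfolding e_def by simp_all
  ultimately obtain a' b' where a'b': "a \<le> a'" "a' \<le> b'" "b' \<le> b"
    "b' - a' = (1 - \<nu> k) * (b - a)" "ratio_bracket a' b' (kernel_step k h) (kernel_step k e)"
    using kernel_step_contracts_bracket[OF _ _ _ _ k ab(5)] by blast
  have "(1 - \<nu> k) * (b - a) \<le> (1 - \<nu> k) * (\<Prod>i\<in>{Suc q..<k}. 1 - \<nu> i)"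
    using ab(4) nu_le_1[OF k] by (intro mult_left_mono) auto
  also have "\<dots> = (\<Prod>i\<in>{Suc q..<Suc q + Suc d}. 1 - \<nu> i)"
    unfolding k_def by (simp add: prod.atLeastLessThan_Suc)
  finally have "b' - a' \<le> (\<Prod>i\<in>{Suc q..<Suc q + Suc d}. 1 - \<nu> i)"
    using a'b'(4) by simp
  moreover have "kernel_steps (\<lambda>_. 1) q (Suc (Suc d)) = kernel_step k h"
    "kernel_steps (\<lambda>_. 1) (Suc q) (Suc d) = kernel_step k e"
    unfolding h_def e_def k_def by (simp_all only: kernel_steps_Suc_right) simp_all
  ultimately show ?case
    using a'b' ab by (intro exI[of _ a'] exI[of _ b']) auto
qed

lemma cond_prob_bracket:
  assumes q: "q \<ge> 1" and qn: "Suc q \<le> n"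
  shows "\<exists>a b. \<nu> q \<le> a \<and> a \<le> b \<and> b \<le> 1 \<and> b - a \<le> (\<Prod>k\<in>{Suc q..<n}. 1 - \<nu> k) \<and>
     (\<forall>m \<ge> n. a \<le> cond_prob piV K q m x \<and> cond_prob piV K q m x \<le> b)"
proof -
  define d where "d = n - Suc q"
  define h e where "h = kernel_steps (\<lambda>_. 1::real) q (Suc d)"
    and "e = kernel_steps (\<lambda>_. 1::real) (Suc q) d"
  have nd: "Suc q + d = n" using qn d_def by simp
  obtain a b where ab: "\<nu> q \<le> a" "a \<le> b" "b \<le> 1" "b - a \<le> (\<Prod>k\<in>{Suc q..<n}. 1 - \<nu> k)"
    "ratio_bracket a b h e"
    using ratio_bracket_shifted_kernel_steps[OF q, of d] nd unfolding h_def e_def by auto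
  have "a \<le> cond_prob piV K q m x \<and> cond_prob piV K q m x \<le> b" if m: "m \<ge> n" for m
  proof -
    define r where "r = m + 1 - n"
    have "m + 1 - q = Suc d + r" "m + 1 - Suc q = d + r" "q + Suc d = n"
      using m nd unfolding r_def by simp_all
    then have num: "obs_prob piV K m {q..m} x = integral\<^sup>L piV (kernel_steps h n r)"
      and den: "obs_prob piV K m {q+1..m} x = integral\<^sup>L piV (kernel_steps e n r)"
      and e_steps: "kernel_steps e n r = kernel_steps (\<lambda>_. 1) (Suc q) (d + r)"
      using obs_prob_eq_kernel_steps[of q m] obs_prob_eq_kernel_steps[of "Suc q" m] q m nd
      unfolding h_def e_def by (simp_all only: kernel_steps_add) simp_all
    have "integral\<^sup>L piV (kernel_steps e n r) > 0"
      using kernel_steps_one_pos[of "Suc q" "d + r"] unfolding e_steps by simp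
    moreover have "a * integral\<^sup>L piV (kernel_steps e n r) \<le> integral\<^sup>L piV (kernel_steps h n r) \<and>
        integral\<^sup>L piV (kernel_steps h n r) \<le> b * integral\<^sup>L piV (kernel_steps e n r)"
      using q nd unfolding h_def e_def
      by (intro integral_ratio_bracket ratio_bracket_kernel_steps bdd_measurable_kernel_steps
          bdd_measurable_const ab(5)[unfolded h_def e_def]) auto
    ultimately show ?thesis
      unfolding cond_prob_def num den by (simp add: pos_le_divide_eq pos_divide_le_eq)
  qed
  then show ?thesis using ab by blast
qed

end

lemma ln_diff_le_div:
  fixes c a b :: real
  assumes "0 < c" "c \<le> a" "a \<le> b"
  shows "ln b - ln a \<le> (b - a) / c"
proof -
  have "ln b - ln a = ln (b / a)" using assms by (simp add: ln_div)
  also have "\<dots> \<le> b / a - 1" using assms by (intro ln_le_minus_one) simp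
  also have "\<dots> = (b - a) / a" using assms by (simp add: field_simps)
  also have "\<dots> \<le> (b - a) / c" using assms by (intro divide_left_mono) auto
  finally show ?thesis .
qed

lemma abs_ln_diff_le:
  fixes c u v :: real
  assumes "0 < c" "c \<le> u" "c \<le> v"
  shows "\<bar>ln u - ln v\<bar> \<le> \<bar>u - v\<bar> / c"
proof (cases "u \<le> v")
  case True
  then show ?thesis using ln_diff_le_div[OF assms(1,2) True] assms by simp
next
  case False
  then show ?thesis using ln_diff_le_div[OF assms(1,3), of u] assms by simp
qed

lemma abs_ln_le_ln_inverse:
  fixes c u :: real
  assumes "0 < c" "c \<le> u" "u \<le> 1"
  shows "\<bar>ln u\<bar> \<le> ln (1 / c)"
  using assms by (simp add: ln_div)

theorem lemma6:
  fixes piV :: "'v measure"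
    and K :: "nat \<Rightarrow> 'x \<Rightarrow> 'v \<Rightarrow> 'v \<Rightarrow> real"
    and \<nu> :: "nat \<Rightarrow> real"
    and n :: nat
    and x :: "nat \<Rightarrow> 'x"
  assumes prob: "prob_space piV"
    and K_meas: "\<And>i y. i \<ge> 1 \<Longrightarrow> (\<lambda>(v, w). K i y v w) \<in> borel_measurable (piV \<Otimes>\<^sub>M piV)"
    and K_distr: "\<And>i v w. i \<ge> 1 \<Longrightarrow> v \<in> space piV \<Longrightarrow> w \<in> space piV \<Longrightarrow>
                    ((\<lambda>y. K i y v w) has_sum 1) UNIV"
    and nu_pos: "\<And>i. i \<ge> 1 \<Longrightarrow> \<nu> i > 0"
    and H2: "\<And>i y v w. i \<ge> 1 \<Longrightarrow> v \<in> space piV \<Longrightarrow> w \<in> space piV \<Longrightarrow>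
                    \<nu> i \<le> K i y v w \<and> K i y v w \<le> 1"
  shows "(\<forall>q. 1 \<le> q \<and> q \<le> n - 1 \<longrightarrow>
            \<bar>ln (cond_prob piV K q n x)\<bar> \<le> ln (1 / \<nu> q))
       \<and> (\<forall>l q. 1 \<le> l \<and> 1 \<le> q \<and> q \<le> n - 1 \<longrightarrow>
            \<bar>ln (cond_prob piV K q n x) - ln (cond_prob piV K q (n + l) x)\<bar>
              \<le> (1 / \<nu> q) * (\<Prod>k\<in>{q+1..n-1}. (1 - \<nu> k)))"
proof -
  interpret minorized_hmm piV K \<nu> x
    by (rule minorized_hmm.intro[OF prob K_meas nu_pos H2])
  have "\<bar>ln (cond_prob piV K q n x)\<bar> \<le> ln (1 / \<nu> q) \<and>
      \<bar>ln (cond_prob piV K q n x) - ln (cond_prob piV K q (n + l) x)\<bar>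
        \<le> (1 / \<nu> q) * (\<Prod>k\<in>{q+1..n-1}. (1 - \<nu> k))" if q: "1 \<le> q" "q \<le> n - 1" for q l
  proof -
    obtain a b where ab: "\<nu> q \<le> a" "b \<le> 1" "b - a \<le> (\<Prod>k\<in>{Suc q..<n}. 1 - \<nu> k)"
        "\<forall>m \<ge> n. a \<le> cond_prob piV K q m x \<and> cond_prob piV K q m x \<le> b"
      using cond_prob_bracket[OF q(1), of n] q by fastforce
    define c1 c2 where "c1 = cond_prob piV K q n x" and "c2 = cond_prob piV K q (n + l) x"
    have c: "a \<le> c1" "c1 \<le> b" "a \<le> c2" "c2 \<le> b"
      using ab(4) unfolding c1_def c2_def by auto
    have nu: "0 < \<nu> q" using nu_pos q by simp
    have "{q+1..n-1} = {Suc q..<n}" using q by auto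
    moreover have "\<bar>ln c1 - ln c2\<bar> \<le> \<bar>c1 - c2\<bar> / \<nu> q"
      using c ab nu by (intro abs_ln_diff_le) auto
    moreover have "\<bar>c1 - c2\<bar> / \<nu> q \<le> (\<Prod>k\<in>{Suc q..<n}. 1 - \<nu> k) / \<nu> q"
      using c ab nu by (intro divide_right_mono) auto
    ultimately show ?thesis
      using abs_ln_le_ln_inverse[OF nu, of c1] c ab unfolding c1_def c2_def by auto
  qed
  then show ?thesis by blast
qed

end
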